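(* Fix $a,g>0$ and let $\rho_0\in C^\infty(\mathbb{T})$. Suppose $\rho_1,\rho_2$ are solutions in $C^\infty(\mathbb{T})$ (i.e. $\rho_i(\cdot,t)\in C^\infty(\mathbb{T})$ for each $t$) of \[ \partial_t \rho + g\,(H_a\rho)\,\partial_x \rho = 0,\qquad \rho(\cdot,0)=\rho_0, \] on a common time interval $[0,T)$. Then $\rho_1=\rho_2$ on $[0,T)$.
   Context: $\mathbb{T}=[-\pi,\pi)$ is the circle; functions on $\mathbb{T}$ are identified with $2\pi$-periodic functions on $\mathbb{R}$, and $C^\infty(\mathbb{T})$ denotes smooth $2\pi$-periodic functions with all derivatives bounded. For $a>0$, $H_a f(x) := \mathrm{P.V.}\int_{\mathbb{R}} f(x-y)K_a(y)\,dy$ with $K_a(y) := \frac{a^2}{\pi y(y^2+a^2)}$, applied to the periodic extension of $f$. *)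

theory Defs
  imports "HOL-Analysis.Analysis"
begin

text \<open>Smooth 2pi-periodic functions with all derivatives bounded (C-infinity of the circle).\<close>
definition smooth_periodic :: "(real \<Rightarrow> real) \<Rightarrow> bool" where
  "smooth_periodic f \<longleftrightarrow>
     (\<forall>x. f (x + 2 * pi) = f x) \<and>
     (\<forall>k. \<forall>x. (deriv ^^ k) f differentiable (at x)) \<and>
     (\<forall>k. bounded (range ((deriv ^^ k) f)))"

definition kernel_a :: "real \<Rightarrow> real \<Rightarrow> real" where
  "kernel_a a y = a\<^sup>2 / (pi * y * (y\<^sup>2 + a\<^sup>2))"

definition hilbert_a :: "real \<Rightarrow> (real \<Rightarrow> real) \<Rightarrow> real \<Rightarrow> real" where
  "hilbert_a a f x =
     Lim (at_right 0) (\<lambda>\<epsilon>. integral {y. \<epsilon> \<le> \<bar>y\<bar>} (\<lambda>y. f (x - y) * kernel_a a y))"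

definition is_solution ::
  "real \<Rightarrow> real \<Rightarrow> real \<Rightarrow> (real \<Rightarrow> real) \<Rightarrow> (real \<Rightarrow> real \<Rightarrow> real) \<Rightarrow> bool" where
  "is_solution a g T rho0 rho \<longleftrightarrow>
     (\<forall>t\<in>{0..<T}. smooth_periodic (\<lambda>x. rho x t)) \<and>
     (\<forall>k. continuous_on (UNIV \<times> {0..<T}) (\<lambda>(x, t). (deriv ^^ k) (\<lambda>y. rho y t) x)) \<and>
     (\<forall>x. rho x 0 = rho0 x) \<and>
     (\<exists>rho_t. continuous_on (UNIV \<times> {0..<T}) (\<lambda>(x, t). rho_t x t) \<and>
        (\<forall>x. \<forall>t\<in>{0..<T}.
           ((\<lambda>s. rho x s) has_real_derivative rho_t x t) (at t within {0..<T}) \<and>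
           rho_t x t + g * hilbert_a a (\<lambda>y. rho y t) x * deriv (\<lambda>y. rho y t) x = 0))"

end

(*
  Energy method. For w = rho1 - rho2 and E(t) = integral of w^2 over the period,
    E' = -2g * integral of w (H_a rho1 * w_x + H_a w * rho2_x).
  Writing H_a f x as the integral over y > 0 of (f (x - y) - f (x + y)) K_a(y), whose
  first moment y K_a(y) has total mass a/2, each term is bounded by a/2 times a bound
  N y for the integral of u(x) (f (x - y) - f (x + y)).  For the first term
  (u = w w_x, f = rho1) integration by parts moves the derivative onto rho1; for the
  second (u = w rho2_x, f = w) a translation in x leaves only increments of rho2_x.
  Both give N = M E, with M bounding the second derivatives uniformly on [0, t0],
  so E' <= C E with E(0) = 0, and Gronwall's inequality forces E = 0.
*)
theory Submission
  imports Defs "HOL-Library.Periodic_Fun"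
begin

lemma lipschitz_on_UNIV_absD: "L-lipschitz_on UNIV f \<Longrightarrow> \<bar>f s - f t\<bar> \<le> L * \<bar>s - t\<bar>"
  for f :: "real \<Rightarrow> real"
  using lipschitz_onD[of L UNIV f s t] by (simp add: dist_real_def)

lemma lipschitz_on_UNIV_if_derivative_bounded:
  fixes g :: "real \<Rightarrow> real"
  assumes g: "\<And>x. (g has_real_derivative g' x) (at x)" and M: "\<And>x. \<bar>g' x\<bar> \<le> M"
  shows "M-lipschitz_on UNIV g"
proof (rule lipschitz_on_leI)
  fix s t :: real assume "s \<le> t"
  then obtain z where "g t - g s = (t - s) * g' z"
    using MVT2[of s t g g'] g by (cases "s = t") auto
  then have "\<bar>g t - g s\<bar> = (t - s) * \<bar>g' z\<bar>" using \<open>s \<le> t\<close> by (simp add: abs_mult)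
  also have "\<dots> \<le> (t - s) * M" using \<open>s \<le> t\<close> M[of z] by (intro mult_left_mono) auto
  finally show "dist (g s) (g t) \<le> M * dist s t"
    using \<open>s \<le> t\<close> by (simp add: dist_real_def abs_minus_commute mult.commute)
next
  show "0 \<le> M" using M[of 0] by linarith
qed

lemma absolutely_integrable_continuous_dominated:
  fixes f :: "real \<Rightarrow> real"
  assumes "continuous_on S f" "S \<in> sets lebesgue" "h integrable_on S" "\<And>x. x \<in> S \<Longrightarrow> \<bar>f x\<bar> \<le> h x"
  shows "f absolutely_integrable_on S"
  using assms
  by (intro measurable_bounded_by_integrable_imp_absolutely_integrable
      continuous_imp_measurable_on_sets_lebesgue) auto

lemma continuous_on_UNIV_translate:
  fixes h :: "real \<Rightarrow> 'a::topological_space"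
  assumes "continuous_on UNIV h"
  shows "continuous_on UNIV (\<lambda>x. h (x + c))" "continuous_on UNIV (\<lambda>x. h (x - c))"
  by (rule continuous_on_compose2[OF assms]; auto intro: continuous_intros)+

lemma integrable_on_Icc_if_continuous_on_UNIV:
  fixes h :: "real \<Rightarrow> 'a::banach"
  shows "continuous_on UNIV h \<Longrightarrow> h integrable_on {p..q}"
  by (rule integrable_continuous_interval, erule continuous_on_subset) simp

lemma has_real_derivative_integral_square:
  fixes u v :: "real \<Rightarrow> real \<Rightarrow> real"
  assumes u': "\<And>x t. t \<in> U \<Longrightarrow> ((\<lambda>s. u x s) has_real_derivative v x t) (at t within U)"
    and uc: "continuous_on (UNIV \<times> U) (\<lambda>(x, t). u x t)"
    and vc: "continuous_on (UNIV \<times> U) (\<lambda>(x, t). v x t)"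
    and U: "convex U" "t \<in> U"
  shows "((\<lambda>s. integral {p..q} (\<lambda>x. (u x s)\<^sup>2)) has_real_derivative
           integral {p..q} (\<lambda>x. 2 * u x t * v x t)) (at t within U)"
proof -
  have swap: "continuous_on (U \<times> A) (\<lambda>(t, x). F x t)"
    if "continuous_on (UNIV \<times> U) (\<lambda>(x, t). F x t)" for F :: "real \<Rightarrow> real \<Rightarrow> real" and A
  proof -
    have "continuous_on (U \<times> A) (\<lambda>z. (\<lambda>(x, t). F x t) (snd z, fst z))"
      by (intro continuous_on_compose2[OF that] continuous_intros) auto
    then show ?thesis by (simp add: case_prod_beta)
  qed
  have "((\<lambda>s. integral (cbox p q) (\<lambda>x. (u x s)\<^sup>2)) has_field_derivative
      integral (cbox p q) (\<lambda>x. 2 * u x t * v x t)) (at t within U)"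
  proof (rule leibniz_rule_field_derivative[where f = "\<lambda>s x. (u x s)\<^sup>2" and fx = "\<lambda>s x. 2 * u x s * v x s"])
    show "((\<lambda>s. (u x s)\<^sup>2) has_field_derivative 2 * u x s * v x s) (at s within U)" if "s \<in> U" for s x
      by (rule derivative_eq_intros u'[OF that] refl | simp)+
    show "(\<lambda>x. (u x s)\<^sup>2) integrable_on cbox p q" if "s \<in> U" for s
    proof -
      have "continuous_on (cbox p q) (\<lambda>x. (\<lambda>(x, t). u x t) (x, s))"
        using that by (intro continuous_on_compose2[OF uc] continuous_intros) auto
      then show ?thesis by (intro integrable_continuous continuous_intros) simp
    qed
    show "continuous_on (U \<times> cbox p q) (\<lambda>(s, x). 2 * u x s * v x s)"
      using swap[OF uc] swap[OF vc] unfolding case_prod_beta by (intro continuous_intros)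
  qed (use U in auto)
  then show ?thesis by simp
qed

lemma gronwall_zero:
  fixes E E' :: "real \<Rightarrow> real"
  assumes t0: "0 \<le> t0" and E0: "E 0 = 0"
    and E': "\<And>t. t \<in> {0..t0} \<Longrightarrow> (E has_real_derivative E' t) (at t within {0..t0})"
    and le: "\<And>t. t \<in> {0..t0} \<Longrightarrow> E' t \<le> C * E t"
    and nonneg: "\<And>t. t \<in> {0..t0} \<Longrightarrow> 0 \<le> E t"
  shows "E t0 = 0"
proof (cases "t0 = 0")
  case True then show ?thesis using E0 by simp
next
  case False
  then have t0: "0 < t0" using t0 by simp
  define \<phi> where "\<phi> t = E t * exp (- C * t)" for t
  have \<phi>': "(\<phi> has_real_derivative (E' t - C * E t) * exp (- C * t)) (at t within {0..t0})"
    if "t \<in> {0..t0}" for t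
    unfolding \<phi>_def by (rule derivative_eq_intros E'[OF that] refl | simp add: algebra_simps)+
  then have "continuous_on {0..t0} \<phi>"
    using DERIV_continuous continuous_on_eq_continuous_within by blast
  moreover have \<phi>'_at: "(\<phi> has_real_derivative (E' t - C * E t) * exp (- C * t)) (at t)" if "0 < t" "t < t0" for t
    using \<phi>'[of t] that at_within_interior[of t "{0..t0}"] by auto
  ultimately obtain l z where z: "0 < z" "z < t0" "(\<phi> has_real_derivative l) (at z)" "\<phi> t0 - \<phi> 0 = (t0 - 0) * l"
    using MVT[OF t0] real_differentiable_def by meson
  then have "l = (E' z - C * E z) * exp (- C * z)"
    using DERIV_unique \<phi>'_at by blast
  moreover have "(E' z - C * E z) * exp (- C * z) \<le> 0"
    using le[of z] z by (simp add: mult_nonpos_nonneg)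
  ultimately have "t0 * l \<le> 0" using t0 by (simp add: mult_nonneg_nonpos)
  then have "\<phi> t0 \<le> \<phi> 0" using z(4) by simp
  then have "E t0 \<le> 0" by (simp add: \<phi>_def E0 mult_le_0_iff)
  then show ?thesis using nonneg[of t0] t0 by simp
qed

section \<open>Periodic functions\<close>

lemma obtain_shift_into_period:
  fixes x lo :: real
  obtains k :: int where "x - of_int k * (2 * pi) \<in> {lo..lo + 2 * pi}"
proof
  let ?k = "\<lfloor>(x - lo) / (2 * pi)\<rfloor>"
  have "of_int ?k * (2 * pi) \<le> x - lo" "x - lo < (of_int ?k + 1) * (2 * pi)"
    using floor_divide_lower[where q = "2 * pi" and p = "x - lo"]
      floor_divide_upper[where q = "2 * pi" and p = "x - lo"] by simp_all
  then show "x - of_int ?k * (2 * pi) \<in> {lo..lo + 2 * pi}"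
    by (simp add: algebra_simps)
qed

lemma periodic_obtain_in_period:
  assumes "\<And>x. h (x + 2 * pi) = h x"
  obtains x' where "x' \<in> {-pi..pi}" "h x = h x'"
proof -
  interpret periodic_fun_simple h "2 * pi" by standard (fact assms)
  obtain k :: int where "x - of_int k * (2 * pi) \<in> {-pi..-pi + 2 * pi}"
    by (rule obtain_shift_into_period)
  moreover have "h (x - of_int k * (2 * pi)) = h x" by (rule minus_of_int)
  ultimately show ?thesis using that by auto
qed

lemma integral_periodic_shift:
  fixes p :: "real \<Rightarrow> real"
  assumes pc: "continuous_on UNIV p" and pp: "\<And>x. p (x + 2 * pi) = p x"
  shows "integral {-pi..pi} (\<lambda>x. p (x + c)) = integral {-pi..pi} p"
proof -
  interpret periodic_fun_simple p "2 * pi" by standard (fact pp)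
  have int: "p integrable_on {s..t}" for s t
    by (intro integrable_continuous_interval continuous_on_subset[OF pc]) auto
  have shift: "integral {-pi..pi} (\<lambda>x. p (x + c)) = integral {-pi + c..pi + c} p" for c
    using integral_shift_real_ivl[of "-pi + c" c "pi + c" p] by simp
  obtain k :: int where k: "c - of_int k * (2 * pi) \<in> {0..2 * pi}"
    using obtain_shift_into_period[of c 0] by auto
  define c' where "c' = c - of_int k * (2 * pi)"
  have "p (x + c) = p (x + c')" for x
    using plus_of_int[of "x + c'" k] by (simp add: c'_def)
  then have "integral {-pi..pi} (\<lambda>x. p (x + c)) = integral {-pi + c'..pi + c'} p"
    by (simp add: shift)
  also have "\<dots> = integral {-pi + c'..pi} p + integral {pi..pi + c'} p"
    using k int by (intro Henstock_Kurzweil_Integration.integral_combine[symmetric]) (auto simp: c'_def)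
  also have "integral {pi..pi + c'} p = integral {pi - 2 * pi..pi + c' - 2 * pi} (\<lambda>x. p (x + 2 * pi))"
    by (rule integral_shift_real_ivl[symmetric])
  also have "\<dots> = integral {-pi..-pi + c'} p"
    by (simp add: plus_period)
  also have "integral {-pi + c'..pi} p + \<dots> = integral {-pi..pi} p"
    using k int by (subst add.commute, intro Henstock_Kurzweil_Integration.integral_combine) (auto simp: c'_def)
  finally show ?thesis .
qed

lemma bounded_periodic_on_compact_strip:
  fixes F :: "real \<Rightarrow> real \<Rightarrow> real"
  assumes Fc: "continuous_on (UNIV \<times> S) (\<lambda>(x, t). F x t)" and K: "compact K" "K \<subseteq> S"
    and Fp: "\<And>t x. t \<in> K \<Longrightarrow> F (x + 2 * pi) t = F x t"
  obtains M where "\<And>t x. t \<in> K \<Longrightarrow> \<bar>F x t\<bar> \<le> M"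
proof -
  have "continuous_on ({-pi..pi} \<times> K) (\<lambda>(x, t). F x t)"
    using K by (intro continuous_on_subset[OF Fc]) auto
  then have "bounded ((\<lambda>(x, t). F x t) ` ({-pi..pi} \<times> K))"
    using K by (intro compact_imp_bounded compact_continuous_image compact_Times compact_Icc)
  then obtain M where M: "\<forall>z \<in> (\<lambda>(x, t). F x t) ` ({-pi..pi} \<times> K). norm z \<le> M"
    unfolding bounded_iff by blast
  show ?thesis
  proof
    fix t x assume t: "t \<in> K"
    obtain x' where "x' \<in> {-pi..pi}" "F x t = F x' t"
      using periodic_obtain_in_period[of "\<lambda>x. F x t"] Fp[OF t] by blast
    then show "\<bar>F x t\<bar> \<le> M" using M t by force
  qed
qed

lemma periodic_zero_if_integral_square_zero:
  fixes h :: "real \<Rightarrow> real"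
  assumes hc: "continuous_on UNIV h" and hp: "\<And>x. h (x + 2 * pi) = h x"
    and I: "integral {-pi..pi} (\<lambda>x. (h x)\<^sup>2) = 0"
  shows "h x = 0"
proof -
  have hc2: "continuous_on (cbox (-pi) pi) (\<lambda>x. (h x)\<^sup>2)"
    by (intro continuous_intros continuous_on_subset[OF hc]) auto
  then have "((\<lambda>x. (h x)\<^sup>2) has_integral 0) (cbox (-pi) pi)"
    using I integrable_continuous[OF hc2] by (simp add: has_integral_integrable_integral)
  moreover have "box (-pi) pi \<noteq> ({} :: real set)"
    using pi_gt_zero by (simp add: box_real not_le)
  moreover obtain x' where x': "x' \<in> {-pi..pi}" "h x = h x'"
    using periodic_obtain_in_period[of h, OF hp] by blast
  ultimately have "(h x')\<^sup>2 = 0"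
    using hc2 by (intro has_integral_0_cbox_imp_0) (auto simp: box_real)
  then show ?thesis using x' by simp
qed

lemma smooth_periodic_has_real_derivative:
  "smooth_periodic f \<Longrightarrow> ((deriv ^^ k) f has_real_derivative (deriv ^^ Suc k) f x) (at x)"
  unfolding smooth_periodic_def by (simp add: DERIV_deriv_iff_real_differentiable)

lemma smooth_periodic_continuous_on: "smooth_periodic f \<Longrightarrow> continuous_on S ((deriv ^^ k) f)"
  using smooth_periodic_has_real_derivative
  by (meson DERIV_isCont continuous_at_imp_continuous_on)

lemma smooth_periodic_bounded:
  assumes "smooth_periodic f"
  obtains B where "\<And>x. \<bar>(deriv ^^ k) f x\<bar> \<le> B"
proof -
  have "bounded (range ((deriv ^^ k) f))" using assms unfolding smooth_periodic_def by blast
  then show ?thesis using that unfolding bounded_iff by auto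
qed

lemma smooth_periodic_periodic:
  assumes "smooth_periodic f"
  shows "(deriv ^^ k) f (x + 2 * pi) = (deriv ^^ k) f x"
proof (induction k arbitrary: x)
  case 0
  then show ?case using assms unfolding smooth_periodic_def by simp
next
  case (Suc k)
  have "((deriv ^^ k) f has_real_derivative (deriv ^^ Suc k) f (x + 2 * pi)) (at (x + 2 * pi))"
    by (rule smooth_periodic_has_real_derivative[OF assms])
  then have "((\<lambda>z. (deriv ^^ k) f (z + 2 * pi)) has_real_derivative (deriv ^^ Suc k) f (x + 2 * pi)) (at x)"
    by (simp add: DERIV_shift)
  then have "((deriv ^^ k) f has_real_derivative (deriv ^^ Suc k) f (x + 2 * pi)) (at x)"
    by (simp add: Suc)
  then show ?case
    using smooth_periodic_has_real_derivative[OF assms] by (rule DERIV_unique)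
qed

lemma smooth_periodicD:
  assumes "smooth_periodic f"
  shows "(f has_real_derivative deriv f x) (at x)"
    and "f (x + 2 * pi) = f x" "deriv f (x + 2 * pi) = deriv f x"
    and "continuous_on S f" "continuous_on S (deriv f)"
  using smooth_periodic_has_real_derivative[OF assms, of 0 x] smooth_periodic_periodic[OF assms, of 0 x]
    smooth_periodic_periodic[OF assms, of 1 x] smooth_periodic_continuous_on[OF assms, of S 0]
    smooth_periodic_continuous_on[OF assms, of S 1]
  by simp_all

lemma smooth_periodic_lipschitz_bounded:
  assumes "smooth_periodic f"
  obtains L B where "L-lipschitz_on UNIV f" "\<And>x. \<bar>f x\<bar> \<le> B"
proof -
  obtain L where "\<And>x. \<bar>deriv f x\<bar> \<le> L"
    using smooth_periodic_bounded[OF assms, where k = "Suc 0", simplified] by blast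
  then have "L-lipschitz_on UNIV f"
    by (rule lipschitz_on_UNIV_if_derivative_bounded[OF smooth_periodicD(1)[OF assms]])
  moreover obtain B where "\<And>x. \<bar>f x\<bar> \<le> B"
    using smooth_periodic_bounded[OF assms, where k = 0, simplified] by blast
  ultimately show ?thesis using that by blast
qed

lemma deriv_funpow_diff:
  assumes f: "smooth_periodic f" and g: "smooth_periodic g"
  shows "(deriv ^^ k) (\<lambda>x. f x - g x) = (\<lambda>x. (deriv ^^ k) f x - (deriv ^^ k) g x)"
proof (induction k)
  case (Suc k)
  have "deriv (\<lambda>x. (deriv ^^ k) f x - (deriv ^^ k) g x) x = (deriv ^^ Suc k) f x - (deriv ^^ Suc k) g x" for x
    using smooth_periodic_has_real_derivative[OF f, of k x] smooth_periodic_has_real_derivative[OF g, of k x]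
    by (intro DERIV_imp_deriv DERIV_diff)
  then have "deriv (\<lambda>x. (deriv ^^ k) f x - (deriv ^^ k) g x) = (\<lambda>x. (deriv ^^ Suc k) f x - (deriv ^^ Suc k) g x)"
    by (rule ext)
  then show ?case by (simp only: funpow.simps(2) o_apply Suc.IH)
qed simp

lemma smooth_periodic_diff:
  assumes f: "smooth_periodic f" and g: "smooth_periodic g"
  shows "smooth_periodic (\<lambda>x. f x - g x)"
  unfolding smooth_periodic_def deriv_funpow_diff[OF f g]
proof (intro conjI allI)
  show "f (x + 2 * pi) - g (x + 2 * pi) = f x - g x" for x
    using smooth_periodicD(2)[OF f] smooth_periodicD(2)[OF g] by simp
  show "(\<lambda>x. (deriv ^^ k) f x - (deriv ^^ k) g x) differentiable (at x)" for k x
    using smooth_periodic_has_real_derivative[OF f, of k x] smooth_periodic_has_real_derivative[OF g, of k x]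
    by (intro differentiable_diff) (auto simp: real_differentiable_def)
  show "bounded (range (\<lambda>x. (deriv ^^ k) f x - (deriv ^^ k) g x))" for k
  proof -
    obtain B1 where B1: "\<And>x. \<bar>(deriv ^^ k) f x\<bar> \<le> B1"
      using smooth_periodic_bounded[OF f, where k = k] by blast
    obtain B2 where B2: "\<And>x. \<bar>(deriv ^^ k) g x\<bar> \<le> B2"
      using smooth_periodic_bounded[OF g, where k = k] by blast
    have "\<bar>(deriv ^^ k) f x - (deriv ^^ k) g x\<bar> \<le> B1 + B2" for x
      using abs_triangle_ineq4[of "(deriv ^^ k) f x" "(deriv ^^ k) g x"] B1[of x] B2[of x] by linarith
    then show ?thesis unfolding bounded_iff by (intro exI[of _ "B1 + B2"]) auto
  qed
qed

section \<open>The kernel\<close>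

definition kernel_moment :: "real \<Rightarrow> real \<Rightarrow> real" where
  "kernel_moment a y = a\<^sup>2 / (pi * (y\<^sup>2 + a\<^sup>2))"

lemma kernel_moment_nonneg: "kernel_moment a y \<ge> 0"
  unfolding kernel_moment_def by simp

lemma kernel_moment_le: "a \<noteq> 0 \<Longrightarrow> kernel_moment a y \<le> 1 / pi"
  unfolding kernel_moment_def by (simp add: field_simps add_pos_nonneg)

lemma continuous_on_kernel_moment [continuous_intros]: "a \<noteq> 0 \<Longrightarrow> continuous_on S (kernel_moment a)"
  unfolding kernel_moment_def by (intro continuous_intros) (auto simp: add_pos_nonneg)

lemma kernel_a_eq_kernel_moment: "y \<noteq> 0 \<Longrightarrow> kernel_a a y = kernel_moment a y / y"
  unfolding kernel_a_def kernel_moment_def by (simp add: field_simps)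

lemma kernel_a_minus: "kernel_a a (- y) = - kernel_a a y"
  unfolding kernel_a_def by simp

lemma kernel_a_nonneg: "y > 0 \<Longrightarrow> kernel_a a y \<ge> 0"
  unfolding kernel_a_def by simp

lemma continuous_on_kernel_a: "0 \<notin> S \<Longrightarrow> a \<noteq> 0 \<Longrightarrow> continuous_on S (kernel_a a)"
  unfolding kernel_a_def by (intro continuous_intros) (auto simp: add_pos_nonneg)

lemma kernel_moment_has_integral:
  assumes "a > 0" "c \<le> d"
  shows "(kernel_moment a has_integral (a / pi) * (arctan (d / a) - arctan (c / a))) {c..d}"
proof -
  have "((\<lambda>y. (a / pi) * arctan (y / a)) has_real_derivative kernel_moment a y) (at y within {c..d})" for y
  proof -
    have "((\<lambda>y. (a / pi) * arctan (y / a)) has_real_derivative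
        (a / pi) * (inverse (1 + (y / a)\<^sup>2) * (1 / a))) (at y within {c..d})"
      using assms by (intro derivative_eq_intros) auto
    moreover have "(a / pi) * (inverse (1 + (y / a)\<^sup>2) * (1 / a)) = kernel_moment a y"
      using assms unfolding kernel_moment_def by (simp add: field_simps power2_eq_square)
    ultimately show ?thesis by simp
  qed
  then have "(kernel_moment a has_integral (a / pi) * arctan (d / a) - (a / pi) * arctan (c / a)) {c..d}"
    using assms(2) by (intro fundamental_theorem_of_calculus)
      (simp_all flip: has_real_derivative_iff_has_vector_derivative)
  then show ?thesis by (simp add: right_diff_distrib)
qed

lemma integral_kernel_moment_le:
  assumes "a > 0" "0 \<le> c" "c \<le> d"
  shows "integral {c..d} (kernel_moment a) \<le> a / 2"
proof -
  have "arctan (c / a) \<ge> 0"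
    using assms by (simp add: zero_le_arctan_iff)
  then have "arctan (d / a) - arctan (c / a) \<le> pi / 2"
    using arctan_ubound[of "d / a"] by linarith
  then have "(a / pi) * (arctan (d / a) - arctan (c / a)) \<le> (a / pi) * (pi / 2)"
    using assms by (intro mult_left_mono) auto
  then show ?thesis
    using integral_unique[OF kernel_moment_has_integral[OF assms(1,3)]] by simp
qed

lemma kernel_moment_has_integral_atLeast:
  assumes "a > 0"
  shows "(kernel_moment a has_integral (a / pi) * (pi / 2 - arctan (c / a))) {c..}"
proof (rule has_integral_to_inf)
  show "kernel_moment a integrable_on {c..y}" for y
    using assms by (intro integrable_continuous_interval continuous_intros) auto
  show "kernel_moment a y \<ge> 0" for y by (rule kernel_moment_nonneg)
  have "filterlim (\<lambda>y. (1 / a) * y) at_top at_top"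
    using assms by (intro filterlim_tendsto_pos_mult_at_top[OF tendsto_const _ filterlim_ident]) auto
  then have "filterlim (\<lambda>y. y / a) at_top at_top"
    by simp
  then have "((\<lambda>y. (a / pi) * (arctan (y / a) - arctan (c / a))) \<longlongrightarrow> (a / pi) * (pi / 2 - arctan (c / a))) at_top"
    by (intro tendsto_intros filterlim_compose[OF tendsto_arctan_at_top])
  moreover have "\<forall>\<^sub>F y in at_top. (a / pi) * (arctan (y / a) - arctan (c / a)) = integral {c..y} (kernel_moment a)"
    using eventually_ge_at_top[of c]
    by eventually_elim (simp add: integral_unique[OF kernel_moment_has_integral[OF assms]])
  ultimately show "((\<lambda>y. integral {c..y} (kernel_moment a)) \<longlongrightarrow> (a / pi) * (pi / 2 - arctan (c / a))) at_top"
    by (rule Lim_transform_eventually)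
qed

lemma kernel_moment_integrable_atLeast: "a > 0 \<Longrightarrow> kernel_moment a integrable_on {c..}"
  using kernel_moment_has_integral_atLeast by blast

lemma kernel_moment_has_integral_greaterThan_0:
  assumes "a > 0" shows "(kernel_moment a has_integral a / 2) {0<..}"
proof -
  have "(kernel_moment a has_integral a / 2) {0..}"
    using kernel_moment_has_integral_atLeast[OF assms, of 0] by simp
  moreover have "negligible {x \<in> {0..} - {0<..}. kernel_moment a x \<noteq> 0}"
    by (rule negligible_subset[of "{0}"]) auto
  moreover have "negligible {x \<in> {0<..} - {0..}. kernel_moment a x \<noteq> (0::real)}"
    by (simp add: empty_imp_negligible)
  ultimately show ?thesis
    using has_integral_spike_set_eq by blast
qed

lemma kernel_moment_absolutely_integrable:
  assumes "a > 0" "S \<in> sets lebesgue" "S \<subseteq> {0<..}"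
  shows "kernel_moment a absolutely_integrable_on S"
proof -
  have "kernel_moment a absolutely_integrable_on {0<..}"
    using kernel_moment_has_integral_greaterThan_0[OF assms(1)] kernel_moment_nonneg
    by (intro nonnegative_absolutely_integrable_1) auto
  then show ?thesis using assms(2,3) by (rule set_integrable_subset)
qed

section \<open>The operator as an integral over the half-line\<close>

definition hilbert_integrand :: "real \<Rightarrow> (real \<Rightarrow> real) \<Rightarrow> real \<Rightarrow> real \<Rightarrow> real" where
  "hilbert_integrand a f x y = (f (x - y) - f (x + y)) * kernel_a a y"

lemma hilbert_integrand_bound:
  assumes "L-lipschitz_on UNIV f" "y > 0"
  shows "\<bar>hilbert_integrand a f x y\<bar> \<le> 2 * L * kernel_moment a y"
proof -
  have "\<bar>f (x - y) - f (x + y)\<bar> \<le> L * (2 * y)"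
    using lipschitz_on_UNIV_absD[OF assms(1), of "x - y" "x + y"] assms(2) by simp
  then have "\<bar>hilbert_integrand a f x y\<bar> \<le> L * (2 * y) * kernel_a a y"
    unfolding hilbert_integrand_def using kernel_a_nonneg[OF assms(2)]
    by (simp add: abs_mult mult_right_mono)
  also have "\<dots> = 2 * L * kernel_moment a y"
    using assms(2) by (simp add: kernel_a_eq_kernel_moment)
  finally show ?thesis .
qed

lemma continuous_on_hilbert_integrand_uncurried:
  assumes "continuous_on UNIV f" "a \<noteq> 0" "0 \<notin> S"
  shows "continuous_on (UNIV \<times> S) (\<lambda>(x, y). hilbert_integrand a f x y)"
  unfolding hilbert_integrand_def case_prod_beta
  by (intro continuous_intros continuous_on_compose2[OF assms(1)]
      continuous_on_compose2[OF continuous_on_kernel_a[OF assms(3,2)]]) auto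

lemma continuous_on_hilbert_integrand:
  assumes "continuous_on UNIV f" "a \<noteq> 0" "0 \<notin> S"
  shows "continuous_on S (hilbert_integrand a f x)"
proof -
  have "continuous_on S (\<lambda>y. (\<lambda>(x, y). hilbert_integrand a f x y) (x, y))"
    by (intro continuous_on_compose2[OF continuous_on_hilbert_integrand_uncurried[OF assms]]
        continuous_intros) auto
  then show ?thesis by simp
qed

lemma hilbert_integrand_absolutely_integrable:
  assumes "a > 0" "L-lipschitz_on UNIV f" "S \<in> sets lebesgue" "S \<subseteq> {0<..}"
  shows "hilbert_integrand a f x absolutely_integrable_on S"
proof (rule absolutely_integrable_continuous_dominated)
  show "continuous_on S (hilbert_integrand a f x)"
    using assms lipschitz_on_continuous_on by (intro continuous_on_hilbert_integrand) auto
  show "(\<lambda>y. 2 * L * kernel_moment a y) integrable_on S"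
    using kernel_moment_absolutely_integrable[OF assms(1,3,4)]
    by (intro integrable_on_mult_right) (simp add: absolutely_integrable_on_def)
  show "\<bar>hilbert_integrand a f x y\<bar> \<le> 2 * L * kernel_moment a y" if "y \<in> S" for y
    using hilbert_integrand_bound[OF assms(2)] that assms(4) by auto
qed fact

lemma hilbert_integrand_integrable:
  "a > 0 \<Longrightarrow> L-lipschitz_on UNIV f \<Longrightarrow> S \<in> sets lebesgue \<Longrightarrow> S \<subseteq> {0<..} \<Longrightarrow>
    hilbert_integrand a f x integrable_on S"
  using hilbert_integrand_absolutely_integrable by (simp add: absolutely_integrable_on_def)

lemma integral_abs_ge_eq_hilbert_integrand:
  assumes a: "a > 0" and L: "L-lipschitz_on UNIV f" and B: "\<And>s. \<bar>f s\<bar> \<le> B" and e: "\<epsilon> > 0"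
  shows "integral {y. \<epsilon> \<le> \<bar>y\<bar>} (\<lambda>y. f (x - y) * kernel_a a y) = integral {\<epsilon>..} (hilbert_integrand a f x)"
proof -
  define k where "k = (\<lambda>y. f (x - y) * kernel_a a y)"
  have fc: "continuous_on UNIV f" using L by (rule lipschitz_on_continuous_on)
  have bnd: "\<bar>f z * kernel_a a y\<bar> \<le> (B / \<epsilon>) * kernel_moment a y" if "y \<in> {\<epsilon>..}" for y z
  proof -
    have y: "y > 0" "y \<ge> \<epsilon>" using that e by auto
    have "\<bar>f z * kernel_a a y\<bar> = \<bar>f z\<bar> * (kernel_moment a y / y)"
      using y by (simp add: abs_mult kernel_a_eq_kernel_moment kernel_moment_nonneg)
    also have "\<dots> \<le> B * (kernel_moment a y / \<epsilon>)"
      using y B[of z] e by (intro mult_mono divide_left_mono) (auto simp: kernel_moment_nonneg)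
    finally show ?thesis by simp
  qed
  have dom: "(\<lambda>y. (B / \<epsilon>) * kernel_moment a y) integrable_on {\<epsilon>..}"
    using kernel_moment_integrable_atLeast[OF a] by (intro integrable_on_mult_right)
  have k1: "k absolutely_integrable_on {\<epsilon>..}"
  proof (rule absolutely_integrable_continuous_dominated[OF _ _ dom])
    show "continuous_on {\<epsilon>..} k" unfolding k_def using e a
      by (intro continuous_intros continuous_on_compose2[OF fc] continuous_on_kernel_a) auto
  qed (use bnd in \<open>auto simp: k_def\<close>)
  have k2: "(\<lambda>y. k (- y)) absolutely_integrable_on {\<epsilon>..}"
  proof (rule absolutely_integrable_continuous_dominated[OF _ _ dom])
    show "continuous_on {\<epsilon>..} (\<lambda>y. k (- y))" unfolding k_def using e a
      by (intro continuous_intros continuous_on_compose2[OF fc]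
          continuous_on_compose2[OF continuous_on_kernel_a[of "{..-\<epsilon>}"]]) auto
  qed (use bnd in \<open>auto simp: k_def kernel_a_minus\<close>)
  have reflect: "k absolutely_integrable_on {..-\<epsilon>} \<and> integral {..-\<epsilon>} k = integral {\<epsilon>..} (\<lambda>y. k (- y))"
    using has_absolute_integral_reflect_real[of "{\<epsilon>..}" "{..-\<epsilon>}" k] k2 by auto
  have "{y. \<epsilon> \<le> \<bar>y\<bar>} = {\<epsilon>..} \<union> {..-\<epsilon>}" by auto
  moreover have "{\<epsilon>..} \<inter> {..-\<epsilon>} = ({} :: real set)" using e by auto
  ultimately have "integral {y. \<epsilon> \<le> \<bar>y\<bar>} k = integral {\<epsilon>..} k + integral {..-\<epsilon>} k"
    using k1 reflect by (simp add: absolutely_integrable_on_def)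
  also have "\<dots> = integral {\<epsilon>..} k + integral {\<epsilon>..} (\<lambda>y. k (- y))"
    using reflect by simp
  also have "\<dots> = integral {\<epsilon>..} (\<lambda>y. k y + k (- y))"
    using k1 k2 by (intro integral_add[symmetric]) (simp_all add: absolutely_integrable_on_def)
  also have "\<dots> = integral {\<epsilon>..} (hilbert_integrand a f x)"
    unfolding k_def hilbert_integrand_def by (simp add: kernel_a_minus algebra_simps)
  finally show ?thesis unfolding k_def .
qed

lemma integral_hilbert_integrand_tail:
  assumes a: "a > 0" and L: "L-lipschitz_on UNIV f" and e: "\<epsilon> > 0"
  shows "\<bar>integral {\<epsilon>..} (hilbert_integrand a f x) - integral {0<..} (hilbert_integrand a f x)\<bar> \<le> 2 * L * \<epsilon> / pi"
proof -
  let ?Q = "hilbert_integrand a f x"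
  have L0: "L \<ge> 0" using L by (rule lipschitz_on_nonneg)
  have near: "\<bar>?Q y\<bar> \<le> 2 * L / pi" if "y \<in> {0<..<\<epsilon>}" for y
  proof -
    have "\<bar>?Q y\<bar> \<le> 2 * L * kernel_moment a y" using hilbert_integrand_bound[OF L] that by simp
    also have "\<dots> \<le> 2 * L * (1 / pi)" using kernel_moment_le[of a y] a L0 by (intro mult_left_mono) auto
    finally show ?thesis by simp
  qed
  have "{0<..} = {0<..<\<epsilon>} \<union> {\<epsilon>..}" "{0<..<\<epsilon>} \<inter> {\<epsilon>..} = ({} :: real set)" using e by auto
  then have "integral {0<..} ?Q = integral {0<..<\<epsilon>} ?Q + integral {\<epsilon>..} ?Q"
    using hilbert_integrand_integrable[OF a L] e by simp
  moreover have "norm (integral {0<..<\<epsilon>} ?Q) \<le> 2 * L * \<epsilon> / pi"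
  proof -
    have "norm (integral {0<..<\<epsilon>} ?Q) \<le> integral {0<..<\<epsilon>} (\<lambda>_. 2 * L / pi)"
    proof (rule integral_norm_bound_integral)
      show "?Q integrable_on {0<..<\<epsilon>}" by (rule hilbert_integrand_integrable[OF a L]) auto
      show "(\<lambda>_. 2 * L / pi) integrable_on {0<..<\<epsilon>}"
        using integrable_const_ivl[of "2 * L / pi" 0 \<epsilon>] by (simp add: integrable_on_open_interval_real)
    qed (use near in simp)
    also have "\<dots> = 2 * L * \<epsilon> / pi"
      using e by (simp flip: integral_open_interval_real)
    finally show ?thesis .
  qed
  ultimately show ?thesis by simp
qed

text \<open>As \<^const>\<open>hilbert_a\<close> is defined through \<^const>\<open>Lim\<close>, which is unspecified for a
  divergent limit, this also shows that the principal value exists.\<close>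

lemma hilbert_a_eq_integral_hilbert_integrand:
  assumes a: "a > 0" and L: "L-lipschitz_on UNIV f" and B: "\<And>s. \<bar>f s\<bar> \<le> B"
  shows "hilbert_a a f x = integral {0<..} (hilbert_integrand a f x)"
proof -
  let ?I = "integral {0<..} (hilbert_integrand a f x)"
  let ?P = "\<lambda>\<epsilon>. integral {y. \<epsilon> \<le> \<bar>y\<bar>} (\<lambda>y. f (x - y) * kernel_a a y)"
  have "((\<lambda>\<epsilon>. ?P \<epsilon> - ?I) \<longlongrightarrow> 0) (at_right 0)"
  proof (rule Lim_null_comparison)
    show "\<forall>\<^sub>F \<epsilon> in at_right 0. norm (?P \<epsilon> - ?I) \<le> 2 * L * \<epsilon> / pi"
      using eventually_at_right_less[of 0]
      by eventually_elim
        (simp add: integral_abs_ge_eq_hilbert_integrand[OF a L B] integral_hilbert_integrand_tail[OF a L])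
    have "((\<lambda>\<epsilon>. 2 * L * \<epsilon> / pi) \<longlongrightarrow> 2 * L * 0 / pi) (at_right 0)"
      by (intro tendsto_intros) simp
    then show "((\<lambda>\<epsilon>. 2 * L * \<epsilon> / pi) \<longlongrightarrow> 0) (at_right 0)" by simp
  qed
  then have "(?P \<longlongrightarrow> ?I) (at_right 0)" by (simp add: LIM_zero_iff)
  then show ?thesis unfolding hilbert_a_def by (intro tendsto_Lim) simp_all
qed

lemma hilbert_a_diff:
  assumes a: "a > 0"
    and L1: "L1-lipschitz_on UNIV f1" and B1: "\<And>s. \<bar>f1 s\<bar> \<le> B1"
    and L2: "L2-lipschitz_on UNIV f2" and B2: "\<And>s. \<bar>f2 s\<bar> \<le> B2"
  shows "hilbert_a a (\<lambda>x. f1 x - f2 x) x = hilbert_a a f1 x - hilbert_a a f2 x"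
proof -
  have "\<bar>f1 s - f2 s\<bar> \<le> B1 + B2" for s using B1[of s] B2[of s] by linarith
  then have "hilbert_a a (\<lambda>x. f1 x - f2 x) x = integral {0<..} (hilbert_integrand a (\<lambda>x. f1 x - f2 x) x)"
    by (rule hilbert_a_eq_integral_hilbert_integrand[OF a lipschitz_on_diff[OF L1 L2]])
  also have "\<dots> = integral {0<..} (\<lambda>y. hilbert_integrand a f1 x y - hilbert_integrand a f2 x y)"
    by (intro arg_cong[where f = "integral {0<..}"] ext) (simp add: hilbert_integrand_def algebra_simps)
  also have "\<dots> = integral {0<..} (hilbert_integrand a f1 x) - integral {0<..} (hilbert_integrand a f2 x)"
    using hilbert_integrand_integrable[OF a L1] hilbert_integrand_integrable[OF a L2]
    by (intro integral_diff) auto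
  finally show ?thesis
    using hilbert_a_eq_integral_hilbert_integrand[OF a L1 B1] hilbert_a_eq_integral_hilbert_integrand[OF a L2 B2]
    by simp
qed

lemma integral_hilbert_integrand_bound:
  assumes a: "a > 0" and L: "L-lipschitz_on UNIV f" and cd: "0 < c" "c \<le> d"
  shows "\<bar>integral {c..d} (hilbert_integrand a f x)\<bar> \<le> L * a"
proof -
  have "norm (integral {c..d} (hilbert_integrand a f x)) \<le> integral {c..d} (\<lambda>y. 2 * L * kernel_moment a y)"
  proof (rule integral_norm_bound_integral)
    show "hilbert_integrand a f x integrable_on {c..d}"
      using cd by (intro hilbert_integrand_integrable[OF a L]) auto
    show "(\<lambda>y. 2 * L * kernel_moment a y) integrable_on {c..d}"
      using a by (intro integrable_continuous_interval continuous_intros) auto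
  qed (use hilbert_integrand_bound[OF L] cd in auto)
  also have "\<dots> = 2 * L * integral {c..d} (kernel_moment a)" by simp
  also have "\<dots> \<le> 2 * L * (a / 2)"
    using lipschitz_on_nonneg[OF L] integral_kernel_moment_le[OF a _ cd(2)] cd(1)
    by (intro mult_left_mono) auto
  finally show ?thesis by simp
qed

lemma truncated_integral_hilbert_integrand_tendsto:
  assumes a: "a > 0" and L: "L-lipschitz_on UNIV f"
  shows "(\<lambda>n. integral {1 / Suc n..Suc n} (hilbert_integrand a f x)) \<longlonglongrightarrow> integral {0<..} (hilbert_integrand a f x)"
proof -
  let ?Q = "hilbert_integrand a f x"
  define Q' where "Q' n y = (if y \<in> {1 / Suc n..Suc n} then ?Q y else 0)" for n :: nat and y :: real
  have sub: "{1 / Suc n..Suc n} \<subseteq> {0<..}" for n :: nat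
    by (auto intro: less_le_trans[of 0 "1 / Suc n"])
  have "(\<lambda>n. integral {0<..} (Q' n)) \<longlonglongrightarrow> integral {0<..} ?Q"
  proof (rule dominated_convergence(2))
    show "Q' n integrable_on {0<..}" for n
      unfolding Q'_def integrable_restrict_Int Int_absorb2[OF sub]
      using sub by (intro hilbert_integrand_integrable[OF a L]) auto
    show "(\<lambda>y. 2 * L * kernel_moment a y) integrable_on {0<..}"
      using kernel_moment_has_integral_greaterThan_0[OF a] by (intro integrable_on_mult_right) blast
    show "norm (Q' n y) \<le> 2 * L * kernel_moment a y" if "y \<in> {0<..}" for n y
      using hilbert_integrand_bound[OF L, of y a x] that lipschitz_on_nonneg[OF L] kernel_moment_nonneg[of a y]
      by (auto simp: Q'_def)
    show "(\<lambda>n. Q' n y) \<longlonglongrightarrow> ?Q y" if "y \<in> {0<..}" for y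
    proof (rule tendsto_eventually)
      obtain N :: nat where N: "max y (1 / y) \<le> N" using real_arch_simple by blast
      have mem: "y \<in> {1 / Suc n..Suc n}" if "N \<le> n" for n
      proof -
        have y: "y > 0" "y \<le> N" "1 / y \<le> N" using N \<open>y \<in> {0<..}\<close> by auto
        then have "1 \<le> y * Suc n"
          using that mult_left_mono[of "real N" "Suc n" y] by (simp add: field_simps)
        then show ?thesis using y that by (simp add: field_simps)
      qed
      have "Q' n y = ?Q y" if "N \<le> n" for n
        using mem[OF that] by (simp add: Q'_def)
      then show "\<forall>\<^sub>F n in sequentially. Q' n y = ?Q y"
        by (rule eventually_sequentiallyI)
    qed
  qed
  moreover have "integral {0<..} (Q' n) = integral {1 / Suc n..Suc n} ?Q" for n
    unfolding Q'_def integral_restrict_Int Int_absorb2[OF sub] ..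
  ultimately show ?thesis by simp
qed

lemma continuous_on_integral_hilbert_integrand:
  assumes "a \<noteq> 0" "continuous_on UNIV f" "0 < c"
  shows "continuous_on S (\<lambda>x. integral {c..d} (hilbert_integrand a f x))"
proof -
  have "continuous_on (S \<times> cbox c d) (\<lambda>(x, y). hilbert_integrand a f x y)"
    using assms by (intro continuous_on_subset[OF continuous_on_hilbert_integrand_uncurried[of f a "{c..d}"]]) auto
  then show ?thesis using integral_continuous_on_param by fastforce
qed

lemma integral_mult_truncated_hilbert_swap:
  assumes a: "a > 0" and fc: "continuous_on UNIV f" and uc: "continuous_on {p..q} u" and c: "0 < c"
  defines "D y \<equiv> integral {p..q} (\<lambda>x. u x * (f (x - y) - f (x + y)))"
  shows "integral {p..q} (\<lambda>x. u x * integral {c..d} (hilbert_integrand a f x))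
           = integral {c..d} (\<lambda>y. D y * kernel_a a y)"
    and "(\<lambda>y. D y * kernel_a a y) integrable_on {c..d}"
proof -
  have Qc: "continuous_on (UNIV \<times> {c..d}) (\<lambda>(x, y). hilbert_integrand a f x y)"
    using a c by (intro continuous_on_hilbert_integrand_uncurried[OF fc]) auto
  have UQc: "continuous_on ({p..q} \<times> {c..d}) (\<lambda>(x, y). u x * hilbert_integrand a f x y)"
    unfolding case_prod_beta
    by (intro continuous_intros continuous_on_compose2[OF uc]
        continuous_on_compose2[OF Qc[unfolded case_prod_beta]]) auto
  have DK: "integral {p..q} (\<lambda>x. u x * hilbert_integrand a f x y) = D y * kernel_a a y" for y
    unfolding D_def hilbert_integrand_def by (simp add: mult.assoc flip: integral_mult_left)
  have "integral {p..q} (\<lambda>x. integral {c..d} (\<lambda>y. u x * hilbert_integrand a f x y))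
      = integral {c..d} (\<lambda>y. integral {p..q} (\<lambda>x. u x * hilbert_integrand a f x y))"
    using UQc integral_swap_continuous[of p c q d "\<lambda>x y. u x * hilbert_integrand a f x y"]
    by (simp add: cbox_Pair_eq)
  then show "integral {p..q} (\<lambda>x. u x * integral {c..d} (hilbert_integrand a f x))
      = integral {c..d} (\<lambda>y. D y * kernel_a a y)"
    by (simp add: DK)
  have "continuous_on ({c..d} \<times> cbox p q) (\<lambda>z. (\<lambda>(x, y). u x * hilbert_integrand a f x y) (snd z, fst z))"
    by (intro continuous_on_compose2[OF UQc] continuous_intros) auto
  then have "continuous_on {c..d} (\<lambda>y. integral {p..q} (\<lambda>x. u x * hilbert_integrand a f x y))"
    using integral_continuous_on_param[of _ p q "\<lambda>y x. u x * hilbert_integrand a f x y"]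
    by (simp add: case_prod_beta)
  then show "(\<lambda>y. D y * kernel_a a y) integrable_on {c..d}"
    by (simp add: DK integrable_continuous_interval)
qed

lemma integral_mult_truncated_hilbert_le:
  assumes a: "a > 0" and fc: "continuous_on UNIV f" and uc: "continuous_on {p..q} u"
    and cd: "0 < c" "c \<le> d" and N: "N \<ge> 0"
    and test: "\<And>y. y > 0 \<Longrightarrow> \<bar>integral {p..q} (\<lambda>x. u x * (f (x - y) - f (x + y)))\<bar> \<le> N * y"
  shows "\<bar>integral {p..q} (\<lambda>x. u x * integral {c..d} (hilbert_integrand a f x))\<bar> \<le> N * a / 2"
proof -
  let ?D = "\<lambda>y. integral {p..q} (\<lambda>x. u x * (f (x - y) - f (x + y)))"
  note swap = integral_mult_truncated_hilbert_swap[OF a fc uc cd(1), of d]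
  have "norm (integral {c..d} (\<lambda>y. ?D y * kernel_a a y)) \<le> integral {c..d} (\<lambda>y. N * kernel_moment a y)"
  proof (rule integral_norm_bound_integral[OF swap(2)])
    show "(\<lambda>y. N * kernel_moment a y) integrable_on {c..d}"
      using a by (intro integrable_continuous_interval continuous_intros) auto
    fix y assume "y \<in> {c..d}"
    then have y: "y > 0" using cd by auto
    have "norm (?D y * kernel_a a y) = \<bar>?D y\<bar> * kernel_a a y"
      using kernel_a_nonneg[OF y] by (simp add: abs_mult)
    also have "\<dots> \<le> N * y * kernel_a a y"
      using test[OF y] kernel_a_nonneg[OF y] by (rule mult_right_mono)
    also have "\<dots> = N * kernel_moment a y"
      using y by (simp add: kernel_a_eq_kernel_moment)
    finally show "norm (?D y * kernel_a a y) \<le> N * kernel_moment a y" .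
  qed
  also have "\<dots> = N * integral {c..d} (kernel_moment a)" by simp
  also have "\<dots> \<le> N * (a / 2)"
    using N integral_kernel_moment_le[OF a _ cd(2)] cd(1) by (intro mult_left_mono) auto
  finally show ?thesis using swap(1) by simp
qed

lemma integral_mult_hilbert_a_le:
  assumes a: "a > 0" and L: "L-lipschitz_on UNIV f" and B: "\<And>s. \<bar>f s\<bar> \<le> B"
    and uc: "continuous_on {p..q} u"
    and test: "\<And>y. y > 0 \<Longrightarrow> \<bar>integral {p..q} (\<lambda>x. u x * (f (x - y) - f (x + y)))\<bar> \<le> N * y"
  shows "(\<lambda>x. u x * hilbert_a a f x) integrable_on {p..q}"
    and "\<bar>integral {p..q} (\<lambda>x. u x * hilbert_a a f x)\<bar> \<le> N * a / 2"
  unfolding hilbert_a_eq_integral_hilbert_integrand[OF a L B]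
proof -
  let ?H = "\<lambda>n x. integral {1 / Suc n..Suc n} (hilbert_integrand a f x)"
  have fc: "continuous_on UNIV f" using L by (rule lipschitz_on_continuous_on)
  have N: "N \<ge> 0" using test[of 1] by linarith
  have trunc: "1 / real (Suc n) \<le> Suc n" for n
    using order_trans[of "1 / real (Suc n)" 1 "real (Suc n)"] by (simp add: divide_le_eq)
  obtain U where U: "\<And>x. x \<in> {p..q} \<Longrightarrow> \<bar>u x\<bar> \<le> U"
    using compact_imp_bounded[OF compact_continuous_image[OF uc compact_Icc]]
    unfolding bounded_iff by (metis atLeastAtMost_iff image_eqI real_norm_def)
  have "(\<lambda>x. u x * ?H n x) integrable_on {p..q}" for n
    using a by (intro integrable_continuous_interval continuous_intros uc
        continuous_on_integral_hilbert_integrand[OF _ fc]) auto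
  moreover have "(\<lambda>_. U * (L * a)) integrable_on {p..q}" by (rule integrable_const_ivl)
  moreover have "norm (u x * ?H n x) \<le> U * (L * a)" if "x \<in> {p..q}" for n x
    using U[OF that] integral_hilbert_integrand_bound[OF a L _ trunc[of n], of x]
    by (simp add: abs_mult mult_mono)
  moreover have "(\<lambda>n. u x * ?H n x) \<longlonglongrightarrow> u x * integral {0<..} (hilbert_integrand a f x)" for x
    by (intro tendsto_intros truncated_integral_hilbert_integrand_tendsto[OF a L])
  ultimately have int: "(\<lambda>x. u x * integral {0<..} (hilbert_integrand a f x)) integrable_on {p..q}"
    and conv: "(\<lambda>n. integral {p..q} (\<lambda>x. u x * ?H n x))
      \<longlonglongrightarrow> integral {p..q} (\<lambda>x. u x * integral {0<..} (hilbert_integrand a f x))"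
    using dominated_convergence[of "\<lambda>n x. u x * ?H n x" "{p..q}" "\<lambda>_. U * (L * a)"
        "\<lambda>x. u x * integral {0<..} (hilbert_integrand a f x)"] by blast+
  show "(\<lambda>x. u x * integral {0<..} (hilbert_integrand a f x)) integrable_on {p..q}" by (fact int)
  have "\<bar>integral {p..q} (\<lambda>x. u x * ?H n x)\<bar> \<le> N * a / 2" for n
    by (rule integral_mult_truncated_hilbert_le[OF a fc uc _ trunc N test]) simp
  then show "\<bar>integral {p..q} (\<lambda>x. u x * integral {0<..} (hilbert_integrand a f x))\<bar> \<le> N * a / 2"
    by (intro tendsto_upperbound[OF tendsto_rabs[OF conv]]) auto
qed

section \<open>The energy estimate\<close>

text \<open>Integration by parts, with w w' = (w^2/2)', moves the derivative onto r.\<close>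

lemma integral_mult_deriv_shift_diff_eq:
  fixes w w' r r' :: "real \<Rightarrow> real"
  assumes wd: "\<And>x. (w has_real_derivative w' x) (at x)" and w'c: "continuous_on UNIV w'"
    and wp: "\<And>x. w (x + 2 * pi) = w x"
    and rd: "\<And>x. (r has_real_derivative r' x) (at x)" and r'c: "continuous_on UNIV r'"
    and rp: "\<And>x. r (x + 2 * pi) = r x"
  shows "integral {-pi..pi} (\<lambda>x. (w x * w' x) * (r (x - y) - r (x + y)))
           = - integral {-pi..pi} (\<lambda>x. (w x)\<^sup>2 / 2 * (r' (x - y) - r' (x + y)))"
proof -
  have wc: "continuous_on UNIV w" and rc: "continuous_on UNIV r"
    using wd rd by (meson DERIV_isCont continuous_at_imp_continuous_on)+
  define A where "A x = (w x * w' x) * (r (x - y) - r (x + y))" for x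
  define B where "B x = (w x)\<^sup>2 / 2 * (r' (x - y) - r' (x + y))" for x
  define F where "F x = (w x)\<^sup>2 / 2 * (r (x - y) - r (x + y))" for x
  have r_minus: "((\<lambda>x. r (x - y)) has_real_derivative r' (x - y)) (at x)" for x
    using DERIV_shift[of r "r' (x - y)" x "- y"] rd by simp
  have r_plus: "((\<lambda>x. r (x + y)) has_real_derivative r' (x + y)) (at x)" for x
    using DERIV_shift[of r "r' (x + y)" x y] rd by simp
  have "(F has_real_derivative A x + B x) (at x)" for x
  proof -
    have "(F has_real_derivative (2 * w x * w' x) / 2 * (r (x - y) - r (x + y))
        + (w x)\<^sup>2 / 2 * (r' (x - y) - r' (x + y))) (at x)"
      unfolding F_def by (rule derivative_eq_intros r_minus r_plus wd refl | simp)+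
    then show ?thesis by (simp add: A_def B_def)
  qed
  then have "((\<lambda>x. A x + B x) has_integral F pi - F (-pi)) {-pi..pi}"
    by (intro fundamental_theorem_of_calculus)
      (auto intro: has_field_derivative_at_within simp flip: has_real_derivative_iff_has_vector_derivative)
  moreover have "F pi = F (-pi)"
    using wp[of "-pi"] rp[of "-pi - y"] rp[of "-pi + y"] by (simp add: F_def add.commute)
  moreover have Ai: "A integrable_on {-pi..pi}"
    unfolding A_def
    by (intro integrable_on_Icc_if_continuous_on_UNIV continuous_intros wc w'c continuous_on_UNIV_translate[OF rc])
  moreover have Bi: "B integrable_on {-pi..pi}"
    unfolding B_def
    by (intro integrable_on_Icc_if_continuous_on_UNIV continuous_intros wc continuous_on_UNIV_translate[OF r'c]) simp
  ultimately have "integral {-pi..pi} A = - integral {-pi..pi} B"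
    using integral_add[OF Ai Bi] by (simp add: integral_unique)
  then show ?thesis unfolding A_def B_def .
qed

lemma integral_mult_deriv_shift_diff_le:
  fixes w w' r r' :: "real \<Rightarrow> real"
  assumes wd: "\<And>x. (w has_real_derivative w' x) (at x)" and w'c: "continuous_on UNIV w'"
    and wp: "\<And>x. w (x + 2 * pi) = w x"
    and rd: "\<And>x. (r has_real_derivative r' x) (at x)" and M: "M-lipschitz_on UNIV r'"
    and rp: "\<And>x. r (x + 2 * pi) = r x" and y: "y \<ge> 0"
  shows "\<bar>integral {-pi..pi} (\<lambda>x. (w x * w' x) * (r (x - y) - r (x + y)))\<bar>
           \<le> M * integral {-pi..pi} (\<lambda>x. (w x)\<^sup>2) * y"
proof -
  have wc: "continuous_on UNIV w" using wd by (meson DERIV_isCont continuous_at_imp_continuous_on)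
  have r'c: "continuous_on UNIV r'" using M by (rule lipschitz_on_continuous_on)
  define B where "B x = (w x)\<^sup>2 / 2 * (r' (x - y) - r' (x + y))" for x
  have eq: "integral {-pi..pi} (\<lambda>x. (w x * w' x) * (r (x - y) - r (x + y))) = - integral {-pi..pi} B"
    unfolding B_def by (rule integral_mult_deriv_shift_diff_eq[OF wd w'c wp rd r'c rp])
  have "norm (B x) \<le> (w x)\<^sup>2 * (M * y)" for x
  proof -
    have "\<bar>r' (x - y) - r' (x + y)\<bar> \<le> M * (2 * y)"
      using lipschitz_on_UNIV_absD[OF M, of "x - y" "x + y"] y by simp
    then have "(w x)\<^sup>2 / 2 * \<bar>r' (x - y) - r' (x + y)\<bar> \<le> (w x)\<^sup>2 / 2 * (M * (2 * y))"
      by (intro mult_left_mono) auto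
    then show ?thesis
      unfolding B_def by (simp add: abs_mult)
  qed
  then have "norm (integral {-pi..pi} B) \<le> integral {-pi..pi} (\<lambda>x. (w x)\<^sup>2 * (M * y))"
    unfolding B_def
    by (intro integral_norm_bound_integral integrable_on_Icc_if_continuous_on_UNIV continuous_intros wc
        continuous_on_UNIV_translate[OF r'c]) auto
  also have "\<dots> = M * integral {-pi..pi} (\<lambda>x. (w x)\<^sup>2) * y"
    by (simp add: algebra_simps)
  finally show ?thesis using eq by simp
qed

text \<open>Translating the term with w (x + y) by -y (periodicity) leaves only the increment
  b x - b (x - y) of the second factor.\<close>

lemma integral_mult_self_shift_diff_eq:
  fixes w b :: "real \<Rightarrow> real"
  assumes wc: "continuous_on UNIV w" and wp: "\<And>x. w (x + 2 * pi) = w x"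
    and bc: "continuous_on UNIV b" and bp: "\<And>x. b (x + 2 * pi) = b x"
  shows "integral {-pi..pi} (\<lambda>x. (w x * b x) * (w (x - y) - w (x + y)))
           = integral {-pi..pi} (\<lambda>x. w x * w (x - y) * (b x - b (x - y)))"
proof -
  note w_minus = continuous_on_UNIV_translate(2)[OF wc, of y]
    and b_minus = continuous_on_UNIV_translate(2)[OF bc, of y]
    and w_plus = continuous_on_UNIV_translate(1)[OF wc, of y]
  have "integral {-pi..pi} (\<lambda>x. (\<lambda>x. w x * b x * w (x + y)) (x + - y))
      = integral {-pi..pi} (\<lambda>x. w x * b x * w (x + y))"
  proof (rule integral_periodic_shift)
    show "continuous_on UNIV (\<lambda>x. w x * b x * w (x + y))"
      by (intro continuous_intros wc bc w_plus)
    show "w (x + 2 * pi) * b (x + 2 * pi) * w (x + 2 * pi + y) = w x * b x * w (x + y)" for x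
      using wp[of x] bp[of x] wp[of "x + y"] by (simp add: ac_simps)
  qed
  then have shifted: "integral {-pi..pi} (\<lambda>x. w (x - y) * b (x - y) * w x)
      = integral {-pi..pi} (\<lambda>x. w x * b x * w (x + y))"
    by simp
  have "integral {-pi..pi} (\<lambda>x. (w x * b x) * (w (x - y) - w (x + y)))
      = integral {-pi..pi} (\<lambda>x. w x * b x * w (x - y)) - integral {-pi..pi} (\<lambda>x. w x * b x * w (x + y))"
    by (subst integral_diff[symmetric])
      (auto intro!: integrable_on_Icc_if_continuous_on_UNIV continuous_intros wc bc w_minus w_plus
        simp: algebra_simps)
  also have "\<dots> = integral {-pi..pi} (\<lambda>x. w x * b x * w (x - y))
      - integral {-pi..pi} (\<lambda>x. w (x - y) * b (x - y) * w x)"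
    by (simp only: shifted)
  also have "\<dots> = integral {-pi..pi} (\<lambda>x. w x * w (x - y) * (b x - b (x - y)))"
    by (subst integral_diff[symmetric])
      (auto intro!: integrable_on_Icc_if_continuous_on_UNIV continuous_intros wc bc w_minus b_minus
        simp: algebra_simps)
  finally show ?thesis .
qed

lemma integral_mult_self_shift_diff_le:
  fixes w b :: "real \<Rightarrow> real"
  assumes wc: "continuous_on UNIV w" and wp: "\<And>x. w (x + 2 * pi) = w x"
    and M: "M-lipschitz_on UNIV b" and bp: "\<And>x. b (x + 2 * pi) = b x" and y: "y \<ge> 0"
  shows "\<bar>integral {-pi..pi} (\<lambda>x. (w x * b x) * (w (x - y) - w (x + y)))\<bar>
           \<le> M * integral {-pi..pi} (\<lambda>x. (w x)\<^sup>2) * y"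
proof -
  have bc: "continuous_on UNIV b" using M by (rule lipschitz_on_continuous_on)
  note w_minus = continuous_on_UNIV_translate(2)[OF wc, of y]
    and b_minus = continuous_on_UNIV_translate(2)[OF bc, of y]
  note eq = integral_mult_self_shift_diff_eq[OF wc wp bc bp, of y]
  have "norm (w x * w (x - y) * (b x - b (x - y))) \<le> ((w x)\<^sup>2 + (w (x - y))\<^sup>2) * (M * y / 2)" for x
  proof -
    have "\<bar>b x - b (x - y)\<bar> \<le> M * y"
      using lipschitz_on_UNIV_absD[OF M, of x "x - y"] y by simp
    moreover have "\<bar>w x * w (x - y)\<bar> \<le> ((w x)\<^sup>2 + (w (x - y))\<^sup>2) / 2"
      using sum_squares_bound[of "\<bar>w x\<bar>" "\<bar>w (x - y)\<bar>"] by (simp add: abs_mult)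
    ultimately have "\<bar>w x * w (x - y)\<bar> * \<bar>b x - b (x - y)\<bar> \<le> ((w x)\<^sup>2 + (w (x - y))\<^sup>2) / 2 * (M * y)"
      by (intro mult_mono) auto
    then show ?thesis
      by (simp add: abs_mult)
  qed
  then have "norm (integral {-pi..pi} (\<lambda>x. w x * w (x - y) * (b x - b (x - y))))
      \<le> integral {-pi..pi} (\<lambda>x. ((w x)\<^sup>2 + (w (x - y))\<^sup>2) * (M * y / 2))"
    by (intro integral_norm_bound_integral integrable_on_Icc_if_continuous_on_UNIV continuous_intros
        wc bc w_minus b_minus)
  also have "\<dots> = (integral {-pi..pi} (\<lambda>x. (w x)\<^sup>2) + integral {-pi..pi} (\<lambda>x. (w (x - y))\<^sup>2)) * (M * y / 2)"
    by (simp add: integral_add integrable_on_Icc_if_continuous_on_UNIV continuous_intros wc w_minus)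
  also have "integral {-pi..pi} (\<lambda>x. (w (x - y))\<^sup>2) = integral {-pi..pi} (\<lambda>x. (w x)\<^sup>2)"
    using integral_periodic_shift[of "\<lambda>x. (w x)\<^sup>2" "- y"] wp by (simp add: continuous_intros wc)
  finally show ?thesis using eq by (simp add: algebra_simps)
qed

lemma integral_mult_deriv_hilbert_a_le:
  assumes a: "a > 0" and w: "smooth_periodic w" and r: "smooth_periodic r"
    and M: "M-lipschitz_on UNIV (deriv r)"
  shows "(\<lambda>x. (w x * deriv w x) * hilbert_a a r x) integrable_on {-pi..pi}"
    and "\<bar>integral {-pi..pi} (\<lambda>x. (w x * deriv w x) * hilbert_a a r x)\<bar>
           \<le> M * integral {-pi..pi} (\<lambda>x. (w x)\<^sup>2) * a / 2"
proof -
  obtain L B where L: "L-lipschitz_on UNIV r" and B: "\<And>x. \<bar>r x\<bar> \<le> B"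
    using smooth_periodic_lipschitz_bounded[OF r] by blast
  have uc: "continuous_on {-pi..pi} (\<lambda>x. w x * deriv w x)"
    by (intro continuous_intros smooth_periodicD[OF w])
  have test: "\<bar>integral {-pi..pi} (\<lambda>x. (w x * deriv w x) * (r (x - y) - r (x + y)))\<bar>
      \<le> (M * integral {-pi..pi} (\<lambda>x. (w x)\<^sup>2)) * y" if "y > 0" for y
    using that integral_mult_deriv_shift_diff_le[OF smooth_periodicD(1)[OF w] smooth_periodicD(5)[OF w]
        smooth_periodicD(2)[OF w] smooth_periodicD(1)[OF r] M smooth_periodicD(2)[OF r], of y]
    by simp
  show "(\<lambda>x. (w x * deriv w x) * hilbert_a a r x) integrable_on {-pi..pi}"
    by (rule integral_mult_hilbert_a_le(1)[OF a L B uc test])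
  show "\<bar>integral {-pi..pi} (\<lambda>x. (w x * deriv w x) * hilbert_a a r x)\<bar>
      \<le> M * integral {-pi..pi} (\<lambda>x. (w x)\<^sup>2) * a / 2"
    by (rule integral_mult_hilbert_a_le(2)[OF a L B uc test])
qed

lemma integral_mult_self_hilbert_a_le:
  assumes a: "a > 0" and w: "smooth_periodic w" and f: "smooth_periodic f"
    and M: "M-lipschitz_on UNIV (deriv f)"
  shows "(\<lambda>x. (w x * deriv f x) * hilbert_a a w x) integrable_on {-pi..pi}"
    and "\<bar>integral {-pi..pi} (\<lambda>x. (w x * deriv f x) * hilbert_a a w x)\<bar>
           \<le> M * integral {-pi..pi} (\<lambda>x. (w x)\<^sup>2) * a / 2"
proof -
  obtain L B where L: "L-lipschitz_on UNIV w" and B: "\<And>x. \<bar>w x\<bar> \<le> B"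
    using smooth_periodic_lipschitz_bounded[OF w] by blast
  have uc: "continuous_on {-pi..pi} (\<lambda>x. w x * deriv f x)"
    by (intro continuous_intros smooth_periodicD[OF w] smooth_periodicD[OF f])
  have test: "\<bar>integral {-pi..pi} (\<lambda>x. (w x * deriv f x) * (w (x - y) - w (x + y)))\<bar>
      \<le> (M * integral {-pi..pi} (\<lambda>x. (w x)\<^sup>2)) * y" if "y > 0" for y
    using that integral_mult_self_shift_diff_le[OF smooth_periodicD(4)[OF w] smooth_periodicD(2)[OF w]
        M smooth_periodicD(3)[OF f], of y]
    by simp
  show "(\<lambda>x. (w x * deriv f x) * hilbert_a a w x) integrable_on {-pi..pi}"
    by (rule integral_mult_hilbert_a_le(1)[OF a L B uc test])
  show "\<bar>integral {-pi..pi} (\<lambda>x. (w x * deriv f x) * hilbert_a a w x)\<bar>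
      \<le> M * integral {-pi..pi} (\<lambda>x. (w x)\<^sup>2) * a / 2"
    by (rule integral_mult_hilbert_a_le(2)[OF a L B uc test])
qed

lemma integral_transport_difference_le:
  fixes f1 f2 :: "real \<Rightarrow> real"
  assumes a: "a > 0" and g: "g \<ge> 0"
    and f1: "smooth_periodic f1" and f2: "smooth_periodic f2"
    and M1: "M1-lipschitz_on UNIV (deriv f1)" and M2: "M2-lipschitz_on UNIV (deriv f2)"
  shows "integral {-pi..pi} (\<lambda>x. 2 * (f1 x - f2 x) *
             (g * hilbert_a a f2 x * deriv f2 x - g * hilbert_a a f1 x * deriv f1 x))
           \<le> g * a * (M1 + M2) * integral {-pi..pi} (\<lambda>x. (f1 x - f2 x)\<^sup>2)"
proof -
  define w where "w x = f1 x - f2 x" for x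
  define E where "E = integral {-pi..pi} (\<lambda>x. (w x)\<^sup>2)"
  have w: "smooth_periodic w" unfolding w_def by (rule smooth_periodic_diff[OF f1 f2])
  have w': "deriv w x = deriv f1 x - deriv f2 x" for x
    unfolding w_def using fun_cong[OF deriv_funpow_diff[OF f1 f2, of "Suc 0"], of x] by simp
  obtain L1 B1 L2 B2 where "L1-lipschitz_on UNIV f1" "\<And>x. \<bar>f1 x\<bar> \<le> B1"
    and "L2-lipschitz_on UNIV f2" "\<And>x. \<bar>f2 x\<bar> \<le> B2"
    using smooth_periodic_lipschitz_bounded[OF f1] smooth_periodic_lipschitz_bounded[OF f2] by metis
  then have Hw: "hilbert_a a w x = hilbert_a a f1 x - hilbert_a a f2 x" for x
    unfolding w_def by (intro hilbert_a_diff a)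
  define I1 where "I1 = integral {-pi..pi} (\<lambda>x. (w x * deriv w x) * hilbert_a a f1 x)"
  define I2 where "I2 = integral {-pi..pi} (\<lambda>x. (w x * deriv f2 x) * hilbert_a a w x)"
  note T1 = integral_mult_deriv_hilbert_a_le[OF a w f1 M1, folded E_def I1_def]
  note T2 = integral_mult_self_hilbert_a_le[OF a w f2 M2, folded E_def I2_def]
  have "2 * (f1 x - f2 x) * (g * hilbert_a a f2 x * deriv f2 x - g * hilbert_a a f1 x * deriv f1 x)
      = (- 2 * g) * ((w x * deriv w x) * hilbert_a a f1 x + (w x * deriv f2 x) * hilbert_a a w x)" for x
    unfolding w' Hw by (simp add: w_def algebra_simps)
  then have "integral {-pi..pi} (\<lambda>x. 2 * (f1 x - f2 x) *
        (g * hilbert_a a f2 x * deriv f2 x - g * hilbert_a a f1 x * deriv f1 x)) = (- 2 * g) * (I1 + I2)"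
    using T1(1) T2(1) by (simp add: I1_def I2_def integral_add)
  also have "\<dots> \<le> (2 * g) * ((M1 + M2) * E * a / 2)"
  proof -
    have "- (I1 + I2) \<le> (M1 + M2) * E * a / 2"
      using T1(2) T2(2) by (simp add: algebra_simps)
    then have "(2 * g) * - (I1 + I2) \<le> (2 * g) * ((M1 + M2) * E * a / 2)"
      using g by (intro mult_left_mono) auto
    then show ?thesis by (simp add: algebra_simps)
  qed
  finally show ?thesis unfolding E_def w_def by (simp add: algebra_simps)
qed

lemma is_solution_smooth_periodic:
  "is_solution a g T rho0 rho \<Longrightarrow> t \<in> {0..<T} \<Longrightarrow> smooth_periodic (\<lambda>x. rho x t)"
  unfolding is_solution_def by blast

lemma is_solution_initial: "is_solution a g T rho0 rho \<Longrightarrow> rho x 0 = rho0 x"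
  unfolding is_solution_def by blast

lemma is_solutionE:
  assumes "is_solution a g T rho0 rho"
  obtains rho_t where
    "continuous_on (UNIV \<times> {0..<T}) (\<lambda>(x, t). rho x t)"
    "continuous_on (UNIV \<times> {0..<T}) (\<lambda>(x, t). rho_t x t)"
    "\<And>x t. t \<in> {0..<T} \<Longrightarrow> ((\<lambda>s. rho x s) has_real_derivative rho_t x t) (at t within {0..<T})"
    "\<And>x t. t \<in> {0..<T} \<Longrightarrow> rho_t x t = - g * hilbert_a a (\<lambda>y. rho y t) x * deriv (\<lambda>y. rho y t) x"
proof -
  obtain rho_t where c: "continuous_on (UNIV \<times> {0..<T}) (\<lambda>(x, t). rho_t x t)"
    and d: "\<And>x t. t \<in> {0..<T} \<Longrightarrow> ((\<lambda>s. rho x s) has_real_derivative rho_t x t) (at t within {0..<T})"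
    and eq: "\<And>x t. t \<in> {0..<T} \<Longrightarrow> rho_t x t + g * hilbert_a a (\<lambda>y. rho y t) x * deriv (\<lambda>y. rho y t) x = 0"
    using assms unfolding is_solution_def by metis
  have "continuous_on (UNIV \<times> {0..<T}) (\<lambda>(x, t). (deriv ^^ 0) (\<lambda>y. rho y t) x)"
    using assms unfolding is_solution_def by blast
  moreover have "rho_t x t = - g * hilbert_a a (\<lambda>y. rho y t) x * deriv (\<lambda>y. rho y t) x"
    if "t \<in> {0..<T}" for x t
    using eq[OF that, of x] by simp
  ultimately show ?thesis using that c d by simp
qed

definition energy :: "(real \<Rightarrow> real \<Rightarrow> real) \<Rightarrow> (real \<Rightarrow> real \<Rightarrow> real) \<Rightarrow> real \<Rightarrow> real" where
  "energy rho1 rho2 t = integral {-pi..pi} (\<lambda>x. (rho1 x t - rho2 x t)\<^sup>2)"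

lemma is_solution_energy_has_derivative:
  assumes rho1: "is_solution a g T rho0 rho1" and rho2: "is_solution a g T rho0' rho2"
    and t: "t \<in> {0..<T}"
  shows "(energy rho1 rho2 has_real_derivative
      integral {-pi..pi} (\<lambda>x. 2 * (rho1 x t - rho2 x t) *
        (g * hilbert_a a (\<lambda>y. rho2 y t) x * deriv (\<lambda>y. rho2 y t) x
          - g * hilbert_a a (\<lambda>y. rho1 y t) x * deriv (\<lambda>y. rho1 y t) x)))
    (at t within {0..<T})"
proof -
  obtain r1 where c1: "continuous_on (UNIV \<times> {0..<T}) (\<lambda>(x, t). rho1 x t)"
    and r1c: "continuous_on (UNIV \<times> {0..<T}) (\<lambda>(x, t). r1 x t)"
    and r1: "\<And>x t. t \<in> {0..<T} \<Longrightarrow> ((\<lambda>s. rho1 x s) has_real_derivative r1 x t) (at t within {0..<T})"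
    and r1_eq: "\<And>x t. t \<in> {0..<T} \<Longrightarrow> r1 x t = - g * hilbert_a a (\<lambda>y. rho1 y t) x * deriv (\<lambda>y. rho1 y t) x"
    using is_solutionE[OF rho1] by blast
  obtain r2 where c2: "continuous_on (UNIV \<times> {0..<T}) (\<lambda>(x, t). rho2 x t)"
    and r2c: "continuous_on (UNIV \<times> {0..<T}) (\<lambda>(x, t). r2 x t)"
    and r2: "\<And>x t. t \<in> {0..<T} \<Longrightarrow> ((\<lambda>s. rho2 x s) has_real_derivative r2 x t) (at t within {0..<T})"
    and r2_eq: "\<And>x t. t \<in> {0..<T} \<Longrightarrow> r2 x t = - g * hilbert_a a (\<lambda>y. rho2 y t) x * deriv (\<lambda>y. rho2 y t) x"
    using is_solutionE[OF rho2] by blast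
  have "(energy rho1 rho2 has_real_derivative
      integral {-pi..pi} (\<lambda>x. 2 * (rho1 x t - rho2 x t) * (r1 x t - r2 x t))) (at t within {0..<T})"
    unfolding energy_def[abs_def]
  proof (rule has_real_derivative_integral_square)
    show "continuous_on (UNIV \<times> {0..<T}) (\<lambda>(x, t). rho1 x t - rho2 x t)"
      using c1 c2 unfolding case_prod_beta by (rule continuous_on_diff)
    show "continuous_on (UNIV \<times> {0..<T}) (\<lambda>(x, t). r1 x t - r2 x t)"
      using r1c r2c unfolding case_prod_beta by (rule continuous_on_diff)
    show "((\<lambda>s. rho1 x s - rho2 x s) has_real_derivative r1 x s - r2 x s) (at s within {0..<T})"
      if "s \<in> {0..<T}" for x s
      using r1[OF that] r2[OF that] by (rule DERIV_diff)
  qed (use t in auto)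
  then show ?thesis
    using t by (simp add: r1_eq r2_eq algebra_simps)
qed

lemma is_solution_energy_nonneg:
  assumes "is_solution a g T rho0 rho1" "is_solution a g T rho0' rho2" "t \<in> {0..<T}"
  shows "0 \<le> energy rho1 rho2 t"
  unfolding energy_def
  using is_solution_smooth_periodic[OF assms(1,3)] is_solution_smooth_periodic[OF assms(2,3)]
  by (intro integral_nonneg integrable_continuous_interval continuous_intros smooth_periodicD) auto

lemma is_solution_eq_if_energy_eq_0:
  assumes "is_solution a g T rho0 rho1" "is_solution a g T rho0' rho2" "t \<in> {0..<T}"
    and "energy rho1 rho2 t = 0"
  shows "rho1 x t = rho2 x t"
proof -
  have "smooth_periodic (\<lambda>x. rho1 x t - rho2 x t)"
    using is_solution_smooth_periodic[OF assms(1,3)] is_solution_smooth_periodic[OF assms(2,3)]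
    by (rule smooth_periodic_diff)
  then have "rho1 x t - rho2 x t = 0"
    using assms(4) unfolding energy_def
    by (intro periodic_zero_if_integral_square_zero[where h = "\<lambda>x. rho1 x t - rho2 x t"] smooth_periodicD)
  then show ?thesis by simp
qed

lemma is_solution_uniformly_lipschitz_deriv:
  assumes rho: "is_solution a g T rho0 rho" and t0: "t0 \<in> {0..<T}"
  obtains M where "\<And>t. t \<in> {0..t0} \<Longrightarrow> M-lipschitz_on UNIV (deriv (\<lambda>y. rho y t))"
proof -
  have sub: "{0..t0} \<subseteq> {0..<T}" using t0 by auto
  have sp: "smooth_periodic (\<lambda>y. rho y t)" if "t \<in> {0..t0}" for t
    using is_solution_smooth_periodic[OF rho] that sub by blast
  have cont: "continuous_on (UNIV \<times> {0..<T}) (\<lambda>(x, t). (deriv ^^ 2) (\<lambda>y. rho y t) x)"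
    using rho unfolding is_solution_def by blast
  have per: "(deriv ^^ 2) (\<lambda>y. rho y t) (x + 2 * pi) = (deriv ^^ 2) (\<lambda>y. rho y t) x"
    if "t \<in> {0..t0}" for t x
    by (rule smooth_periodic_periodic[OF sp[OF that]])
  obtain M where M: "\<And>t x. t \<in> {0..t0} \<Longrightarrow> \<bar>(deriv ^^ 2) (\<lambda>y. rho y t) x\<bar> \<le> M"
    using bounded_periodic_on_compact_strip[OF cont compact_Icc sub per] by blast
  show ?thesis
  proof
    fix t assume t: "t \<in> {0..t0}"
    have "\<bar>(deriv ^^ Suc 1) (\<lambda>y. rho y t) x\<bar> \<le> M" for x
      using M[OF t, of x] by (simp add: numeral_2_eq_2)
    then have "M-lipschitz_on UNIV ((deriv ^^ 1) (\<lambda>y. rho y t))"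
      by (rule lipschitz_on_UNIV_if_derivative_bounded[OF smooth_periodic_has_real_derivative[OF sp[OF t]]])
    then show "M-lipschitz_on UNIV (deriv (\<lambda>y. rho y t))" by simp
  qed
qed

lemma is_solution_energy_estimate:
  assumes a: "a > 0" and g: "g \<ge> 0"
    and rho1: "is_solution a g T rho0 rho1" and rho2: "is_solution a g T rho0' rho2"
    and t0: "t0 \<in> {0..<T}"
  obtains E' C where
    "\<And>t. t \<in> {0..t0} \<Longrightarrow> (energy rho1 rho2 has_real_derivative E' t) (at t within {0..t0})"
    "\<And>t. t \<in> {0..t0} \<Longrightarrow> E' t \<le> C * energy rho1 rho2 t"
proof -
  obtain M1 where M1: "\<And>t. t \<in> {0..t0} \<Longrightarrow> M1-lipschitz_on UNIV (deriv (\<lambda>y. rho1 y t))"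
    using is_solution_uniformly_lipschitz_deriv[OF rho1 t0] by blast
  obtain M2 where M2: "\<And>t. t \<in> {0..t0} \<Longrightarrow> M2-lipschitz_on UNIV (deriv (\<lambda>y. rho2 y t))"
    using is_solution_uniformly_lipschitz_deriv[OF rho2 t0] by blast
  have sub: "{0..t0} \<subseteq> {0..<T}" using t0 by auto
  show ?thesis
  proof (rule that)
    fix t assume t: "t \<in> {0..t0}"
    show "(energy rho1 rho2 has_real_derivative integral {-pi..pi} (\<lambda>x. 2 * (rho1 x t - rho2 x t) *
        (g * hilbert_a a (\<lambda>y. rho2 y t) x * deriv (\<lambda>y. rho2 y t) x
          - g * hilbert_a a (\<lambda>y. rho1 y t) x * deriv (\<lambda>y. rho1 y t) x))) (at t within {0..t0})"
      using is_solution_energy_has_derivative[OF rho1 rho2] t sub by (blast intro: DERIV_subset)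
    show "integral {-pi..pi} (\<lambda>x. 2 * (rho1 x t - rho2 x t) *
        (g * hilbert_a a (\<lambda>y. rho2 y t) x * deriv (\<lambda>y. rho2 y t) x
          - g * hilbert_a a (\<lambda>y. rho1 y t) x * deriv (\<lambda>y. rho1 y t) x))
      \<le> g * a * (M1 + M2) * energy rho1 rho2 t"
      unfolding energy_def using t sub
      by (intro integral_transport_difference_le a g M1 M2 is_solution_smooth_periodic[OF rho1]
          is_solution_smooth_periodic[OF rho2]) auto
  qed
qed

theorem lemma3p1:
  fixes a g T :: real and rho0 :: "real \<Rightarrow> real" and rho1 rho2 :: "real \<Rightarrow> real \<Rightarrow> real"
  assumes "a > 0" and "g > 0"
    and "smooth_periodic rho0"
    and "is_solution a g T rho0 rho1"
    and "is_solution a g T rho0 rho2"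
  shows "\<forall>x. \<forall>t\<in>{0..<T}. rho1 x t = rho2 x t"
proof (intro allI ballI)
  fix x t0 assume t0: "t0 \<in> {0..<T}"
  obtain E' C where E': "\<And>t. t \<in> {0..t0} \<Longrightarrow> (energy rho1 rho2 has_real_derivative E' t) (at t within {0..t0})"
    and le: "\<And>t. t \<in> {0..t0} \<Longrightarrow> E' t \<le> C * energy rho1 rho2 t"
    using is_solution_energy_estimate[OF \<open>a > 0\<close> less_imp_le[OF \<open>g > 0\<close>] assms(4,5) t0] by blast
  have "energy rho1 rho2 t0 = 0"
  proof (rule gronwall_zero[OF _ _ E' le])
    show "0 \<le> t0" using t0 by simp
    show "energy rho1 rho2 0 = 0"
      by (simp add: energy_def is_solution_initial[OF assms(4)] is_solution_initial[OF assms(5)])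
    show "0 \<le> energy rho1 rho2 t" if "t \<in> {0..t0}" for t
      using that t0 by (intro is_solution_energy_nonneg[OF assms(4,5)]) auto
  qed
  then show "rho1 x t0 = rho2 x t0"
    by (rule is_solution_eq_if_energy_eq_0[OF assms(4,5) t0])
qed

end
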